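(* Let $\mathbb P\in\mathcal P(\mathbb C)$, let $\tau$ be a finite $(\mathcal B_t)$-stopping time and let $(Q_\omega)_{\omega\in\mathbb C}$ be a regular conditional probability distribution of $\mathbb P$ with respect to $\mathcal B_\tau$. Let $(X_t)_{t\geq0}$ be a bounded continuous process on $\mathbb C$ and $A\in\mathbb R$ such that for every $t\geq0$, $\mathbb E^{\mathbb P}(X_t|\mathcal B_t)\leq A$ $\mathbb P$-a.s. Then there is a $\mathbb P$-null set $N\in\mathcal B_\tau$ such that for all $\omega\notin N$ and all $t\geq\tau(\omega)$, $\mathbb E^{Q_\omega}(X_t|\mathcal B_t)\leq A$ $Q_\omega$-a.s.
   Context: $\mathbb C=C(\mathbb R_+;\mathbb R^d)$ with the locally uniform metric, coordinate process $\omega_t$, $\mathcal B_t=\sigma(\omega_r:r\leq t)$, $\mathcal B=\bigvee_{t\geq0}\mathcal B_t$; $\mathcal P(\mathbb C)$ the probability measures on $(\mathbb C,\mathcal B)$. A regular conditional probability distribution of $\mathbb P$ w.r.t. $\mathcal B_\tau$ is a $\mathcal B_\tau$-measurable map $\omega\mapsto Q_\omega\in\mathcal P(\mathbb C)$ with $Q_\omega(\Gamma)=\mathbb P(\Gamma|\mathcal B_\tau)(\omega)$ for $\mathbb P$-a.e. $\omega$, for each $\Gamma\in\mathcal B$. *)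

theory Defs
  imports "HOL-Probability.Probability"
begin

text \<open>A path is represented as a function on all of real,
  continuous on [0,oo) and constant (equal to its value at 0) on the negative reals,
  so this set is in canonical bijection with C(R_+; R^d). R^d is an arbitrary
  Euclidean space 'a.\<close>
definition path_space :: "(real \<Rightarrow> 'a::euclidean_space) set" where
  "path_space = {\<omega>. continuous_on {0..} \<omega> \<and> (\<forall>t<0. \<omega> t = \<omega> 0)}"

text \<open>B_t = sigma(omega_r : r <= t) (coordinate filtration); for t < 0 it is trivial.\<close>
definition coord_filt :: "real \<Rightarrow> (real \<Rightarrow> 'a::euclidean_space) measure" where
  "coord_filt t = sigma path_space
     {(\<lambda>\<omega>. \<omega> r) -` U \<inter> path_space | r U. 0 \<le> r \<and> r \<le> t \<and> open U}"

definition path_sigma :: "(real \<Rightarrow> 'a::euclidean_space) measure" where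
  "path_sigma = sigma path_space
     {(\<lambda>\<omega>. \<omega> r) -` U \<inter> path_space | r U. 0 \<le> r \<and> open U}"

definition stopped_sigma :: "((real \<Rightarrow> 'a::euclidean_space) \<Rightarrow> real) \<Rightarrow> (real \<Rightarrow> 'a) measure" where
  "stopped_sigma \<tau> = sigma path_space
     {A \<in> sets path_sigma. \<forall>t\<ge>0. {\<omega> \<in> A. \<tau> \<omega> \<le> t} \<in> sets (coord_filt t)}"

end

theory Submission
  imports Defs
begin

text \<open>Let \<open>K\<close> bound \<open>|X|\<close> and \<open>|A|\<close>, and for \<open>s \<ge> 0\<close> let \<open>Z\<^sub>s\<close> be a version of
  \<open>E\<^sup>P(X\<^sub>s | B\<^sub>s)\<close> clamped into \<open>[-K, A]\<close>; the clamping makes \<open>Z\<^sub>s \<le> A\<close> hold everywhere,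
  which matters because \<open>Q\<^sub>\<omega>\<close> may charge \<open>P\<close>-null sets.
  An event \<open>B \<in> B\<^sub>\<tau>\<close> contained in \<open>{\<tau> \<le> s}\<close> lies in \<open>B\<^sub>s\<close>, so disintegrating \<open>P\<close> along \<open>Q\<close>
  gives \<open>\<integral>\<^sub>B (\<integral>\<^sub>\<Gamma> X\<^sub>s dQ\<^sub>\<omega>) dP(\<omega>) = \<integral>\<^sub>B (\<integral>\<^sub>\<Gamma> Z\<^sub>s dQ\<^sub>\<omega>) dP(\<omega>)\<close> for every \<open>\<Gamma> \<in> B\<^sub>s\<close>.
  Hence \<open>\<integral>\<^sub>\<Gamma> X\<^sub>s dQ\<^sub>\<omega> = \<integral>\<^sub>\<Gamma> Z\<^sub>s dQ\<^sub>\<omega>\<close> for \<open>P\<close>-a.e. \<open>\<omega>\<close> with \<open>\<tau>(\<omega>) \<le> s\<close>, and only countably many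
  pairs \<open>(s, \<Gamma>)\<close> are needed: rational \<open>s\<close>, and \<open>\<Gamma>\<close> from a countable \<open>\<inter>\<close>-stable generator of
  \<open>B\<^sub>s\<close>. Off the union \<open>N \<in> B\<^sub>\<tau>\<close> of the exceptional sets the identity extends to all of
  \<open>B\<^sub>s\<close>, giving \<open>\<integral>\<^sub>\<Gamma> X\<^sub>s dQ\<^sub>\<omega> \<le> A Q\<^sub>\<omega>(\<Gamma>)\<close> for \<open>\<Gamma> \<in> B\<^sub>t \<subseteq> B\<^sub>s\<close> whenever \<open>\<tau>(\<omega>) \<le> t < s\<close>;
  continuity of \<open>X\<close> and dominated convergence let \<open>s\<close> decrease to \<open>t\<close>, and this integral
  bound on \<open>B\<^sub>t\<close> is equivalent to \<open>E\<^sup>Q\<^sup>\<omega>(X\<^sub>t | B\<^sub>t) \<le> A\<close> a.s.\<close>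

section \<open>Conditional expectations and set integrals\<close>

lemma Rats_tendsto_from_above:
  fixes t u :: real
  assumes "t < u"
  obtains q where "\<And>n. q n \<in> \<rat>" "\<And>n. t < q n" "\<And>n. q n < u" "q \<longlonglongrightarrow> t"
proof -
  have "\<exists>q\<in>\<rat>. t < q \<and> q < min u (t + inverse (Suc n))" for n
    using assms by (intro Rats_dense_in_real) auto
  then obtain q where q: "\<And>n. q n \<in> \<rat> \<and> t < q n \<and> q n < min u (t + inverse (Suc n))"
    by metis
  have "q \<longlonglongrightarrow> t"
    by (rule tendsto_sandwich[OF _ _ tendsto_const LIMSEQ_inverse_real_of_nat_add])
       (use q in \<open>auto intro: always_eventually less_imp_le\<close>)
  with q that show ?thesis by auto
qed

lemma integral_le_of_Rats_right_limit:
  fixes X :: "real \<Rightarrow> 'a \<Rightarrow> real"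
  assumes "finite_measure M" "0 \<le> t"
    and meas: "\<And>s. 0 \<le> s \<Longrightarrow> X s \<in> borel_measurable M"
    and bnd: "\<And>s x. 0 \<le> s \<Longrightarrow> x \<in> space M \<Longrightarrow> \<bar>X s x\<bar> \<le> K"
    and cont: "\<And>x. x \<in> space M \<Longrightarrow> continuous_on {0..} (\<lambda>s. X s x)"
    and le: "\<And>s. s \<in> \<rat> \<Longrightarrow> t < s \<Longrightarrow> (\<integral>x. X s x \<partial>M) \<le> c"
  shows "(\<integral>x. X t x \<partial>M) \<le> c"
proof -
  interpret finite_measure M by (rule assms(1))
  obtain q where q: "\<And>n. q n \<in> \<rat>" "\<And>n. t < q n" and "q \<longlonglongrightarrow> t"
    using Rats_tendsto_from_above[of t "t + 1"] by (metis less_add_one)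
  have q_nonneg: "0 \<le> q n" for n using q(2)[of n] \<open>0 \<le> t\<close> by linarith
  have "(\<lambda>n. \<integral>x. X (q n) x \<partial>M) \<longlonglongrightarrow> (\<integral>x. X t x \<partial>M)"
  proof (rule integral_dominated_convergence[where w="\<lambda>_. K"])
    show "AE x in M. (\<lambda>n. X (q n) x) \<longlonglongrightarrow> X t x"
    proof (rule AE_I2)
      fix x assume "x \<in> space M"
      then show "(\<lambda>n. X (q n) x) \<longlonglongrightarrow> X t x"
        using cont[unfolded continuous_on_sequentially] \<open>q \<longlonglongrightarrow> t\<close> q_nonneg \<open>0 \<le> t\<close>
        by (auto simp: comp_def)
    qed
    show "AE x in M. norm (X (q n) x) \<le> K" for n
      using bnd[OF q_nonneg] by auto
  qed (use meas q_nonneg \<open>0 \<le> t\<close> in auto)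
  then show ?thesis
    using le[OF q] by (intro LIMSEQ_le_const2) auto
qed

lemma set_integral_eq_sigma_sets:
  fixes f g :: "'a \<Rightarrow> real"
  assumes E: "Int_stable E" "E \<subseteq> Pow (space M)" "space M \<in> E" "sigma_sets (space M) E \<subseteq> sets M"
    and f: "integrable M f" and g: "integrable M g"
    and eq: "\<And>A. A \<in> E \<Longrightarrow> (\<integral>x\<in>A. f x \<partial>M) = (\<integral>x\<in>A. g x \<partial>M)"
    and A: "A \<in> sigma_sets (space M) E"
  shows "(\<integral>x\<in>A. f x \<partial>M) = (\<integral>x\<in>A. g x \<partial>M)"
proof -
  have set_int: "set_integrable M B h" if "B \<in> sets M" "integrable M h" for B and h :: "'a \<Rightarrow> real"
    using integrable_mult_indicator[OF that] by (simp add: set_integrable_def)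
  from E(1,2) A show ?thesis
  proof (induction rule: sigma_sets_induct_disjoint)
    case (basic A)
    then show ?case by (rule eq)
  next
    case empty
    then show ?case by (simp add: set_lebesgue_integral_def)
  next
    case (compl A)
    have A: "A \<in> sets M" using compl.hyps E(4) by blast
    have "(\<integral>x\<in>space M - A. h x \<partial>M) = (\<integral>x\<in>space M. h x \<partial>M) - (\<integral>x\<in>A. h x \<partial>M)"
      if "integrable M h" for h :: "'a \<Rightarrow> real"
      using set_integral_Un[of A "space M - A" M h] A set_int that
      by (simp add: Un_absorb1 sets.sets_into_space)
    then show ?case using compl.IH eq[OF E(3)] f g by simp
  next
    case (union A)
    have A: "range A \<subseteq> sets M" using union.hyps(2) E(4) by blast
    have "(\<integral>x\<in>(\<Union>i. A i). h x \<partial>M) = (\<Sum>i. \<integral>x\<in>A i. h x \<partial>M)" if "integrable M h" for h :: "'a \<Rightarrow> real"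
      using union.hyps(1) A that
      by (intro lebesgue_integral_countable_add set_int) (auto simp: disjoint_family_on_def)
    then show ?case using union.IH f g by simp
  qed
qed

lemma (in finite_measure_subalgebra) real_cond_exp_le_const:
  fixes f :: "'a \<Rightarrow> real"
  assumes "integrable M f"
    and le: "\<And>A. A \<in> sets F \<Longrightarrow> (\<integral>x\<in>A. f x \<partial>M) \<le> c * measure M A"
  shows "AE x in M. real_cond_exp M F f x \<le> c"
proof -
  let ?C = "real_cond_exp M F f"
  define G where "G = {x \<in> space F. c < ?C x}"
  let ?h = "\<lambda>x. indicator G x * (?C x - c)"
  have G_F: "G \<in> sets F" unfolding G_def by measurable
  then have G_M: "G \<in> sets M" using subalg by (auto simp: subalgebra_def)
  have int_C: "set_integrable M G ?C"
    unfolding set_integrable_def by (rule integrable_mult_indicator[OF G_M real_cond_exp_int(1)[OF assms(1)]])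
  have int_c: "set_integrable M G (\<lambda>_. c)"
    unfolding set_integrable_def by (rule integrable_mult_indicator[OF G_M]) simp
  have "(\<integral>x. ?h x \<partial>M) = (\<integral>x\<in>G. ?C x - c \<partial>M)"
    by (simp add: set_lebesgue_integral_def)
  also have "\<dots> = (\<integral>x\<in>G. ?C x \<partial>M) - (\<integral>x\<in>G. c \<partial>M)"
    by (rule set_integral_diff(2)[OF int_C int_c])
  also have "\<dots> = (\<integral>x\<in>G. f x \<partial>M) - c * measure M G"
    using real_cond_exp_intA[OF assms(1) G_F] set_integral_const[OF G_M, of c] by simp
  also have "\<dots> \<le> 0" using le[OF G_F] by linarith
  finally have "(\<integral>x. ?h x \<partial>M) \<le> 0" .
  moreover have h_nonneg: "0 \<le> ?h x" for x
    by (simp add: G_def split: split_indicator)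
  then have "0 \<le> (\<integral>x. ?h x \<partial>M)" by (simp add: integral_nonneg_AE)
  ultimately have "(\<integral>x. ?h x \<partial>M) = 0" by linarith
  moreover have int_h: "integrable M ?h"
    using set_integral_diff(1)[OF int_C int_c] by (simp add: set_integrable_def)
  ultimately have "AE x in M. ?h x = 0"
    using integral_nonneg_eq_0_iff_AE[OF int_h AE_I2[OF h_nonneg]] by blast
  with AE_space show ?thesis
    by eventually_elim (use subalg in \<open>auto simp: G_def subalgebra_def indicator_def not_less\<close>)
qed

lemma (in sigma_finite_subalgebra) real_cond_exp_bounded_version:
  fixes f :: "'a \<Rightarrow> real"
  assumes f: "integrable M f" and "a \<le> b"
    and ge: "AE x in M. a \<le> f x" and le: "AE x in M. real_cond_exp M F f x \<le> b"
  shows "\<exists>g\<in>borel_measurable F. (\<forall>x. a \<le> g x \<and> g x \<le> b) \<and>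
           (\<forall>A\<in>sets F. (\<integral>x\<in>A. f x \<partial>M) = (\<integral>x\<in>A. g x \<partial>M))"
proof (intro bexI conjI ballI allI)
  let ?C = "real_cond_exp M F f"
  let ?g = "\<lambda>x. max a (min b (?C x))"
  show "?g \<in> borel_measurable F" by measurable
  fix x show "a \<le> ?g x" "?g x \<le> b" using \<open>a \<le> b\<close> by auto
next
  let ?C = "real_cond_exp M F f"
  fix A assume A: "A \<in> sets F"
  have A_M: "A \<in> sets M" using A subalg by (auto simp: subalgebra_def)
  have "AE x in M. ?C x = max a (min b (?C x))"
    using real_cond_exp_ge_c[OF f ge] le by eventually_elim auto
  then have "(\<integral>x\<in>A. ?C x \<partial>M) = (\<integral>x\<in>A. max a (min b (?C x)) \<partial>M)"
    by (intro set_lebesgue_integral_cong_AE A_M) (auto elim: eventually_mono)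
  then show "(\<integral>x\<in>A. f x \<partial>M) = (\<integral>x\<in>A. max a (min b (?C x)) \<partial>M)"
    using real_cond_exp_intA[OF f A] by simp
qed

section \<open>Regular conditional probabilities\<close>

locale regular_cond_prob = prob_space P + finite_measure_subalgebra P F for P F +
  fixes Q :: "'a \<Rightarrow> 'a measure"
  assumes Q_measurable: "Q \<in> F \<rightarrow>\<^sub>M prob_algebra P"
    and Q_cond_prob:
      "\<And>\<Gamma>. \<Gamma> \<in> sets P \<Longrightarrow> AE \<omega> in P. measure (Q \<omega>) \<Gamma> = real_cond_exp P F (indicator \<Gamma>) \<omega>"
begin

lemma space_F: "space F = space P"
  using subalg by (simp add: subalgebra_def)

lemma sets_F_subset: "B \<in> sets F \<Longrightarrow> B \<in> sets P"
  using subalg by (auto simp: subalgebra_def)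

lemma prob_space_Q: "\<omega> \<in> space P \<Longrightarrow> prob_space (Q \<omega>)"
  and sets_Q: "\<omega> \<in> space P \<Longrightarrow> sets (Q \<omega>) = sets P"
  using measurable_space[OF Q_measurable, of \<omega>] by (auto simp: space_F space_prob_algebra)

lemma Q_subprob: "Q \<in> F \<rightarrow>\<^sub>M subprob_algebra P"
  by (rule measurable_prob_algebraD[OF Q_measurable])

lemma Q_subprob_density: "Q \<in> density (restr_to_subalg P F) g \<rightarrow>\<^sub>M subprob_algebra P"
  using Q_subprob by (simp add: sets_restr_to_subalg[OF subalg] cong: measurable_cong_sets)

lemma measurable_integral_Q:
  fixes h :: "'a \<Rightarrow> real"
  assumes "h \<in> borel_measurable P"
  shows "(\<lambda>\<omega>. \<integral>y. h y \<partial>Q \<omega>) \<in> borel_measurable F"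
  using integral_measurable_subprob_algebra[OF assms] Q_subprob by (rule measurable_compose[rotated])

lemma integral_Q_bounded:
  fixes h :: "'a \<Rightarrow> real"
  assumes \<omega>: "\<omega> \<in> space P" and h: "h \<in> borel_measurable P" and bnd: "\<And>x. x \<in> space P \<Longrightarrow> \<bar>h x\<bar> \<le> C"
  shows "\<bar>\<integral>y. h y \<partial>Q \<omega>\<bar> \<le> C"
proof -
  interpret Q\<omega>: prob_space "Q \<omega>" by (rule prob_space_Q[OF \<omega>])
  have space_Q\<omega>: "space (Q \<omega>) = space P" using sets_eq_imp_space_eq[OF sets_Q[OF \<omega>]] .
  have "integrable (Q \<omega>) h"
    using h bnd by (intro Q\<omega>.integrable_const_bound[where B=C]) (auto simp: space_Q\<omega> measurable_cong_sets[OF sets_Q[OF \<omega>] refl])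
  moreover have "h x \<le> C" "-C \<le> h x" if "x \<in> space (Q \<omega>)" for x
    using bnd[of x] that by (auto simp: space_Q\<omega>)
  then have "AE x in Q \<omega>. h x \<le> C" "AE x in Q \<omega>. -C \<le> h x" by auto
  ultimately show ?thesis
    using Q\<omega>.integral_le_const[of h C] Q\<omega>.integral_ge_const[of h "-C"] by (simp add: abs_le_iff)
qed

lemma bind_density_Q:
  assumes B: "B \<in> sets F"
  shows "density (restr_to_subalg P F) (indicator B) \<bind> Q = density P (indicator B)"
proof (rule measure_eqI)
  let ?M = "density (restr_to_subalg P F) (indicator B)"
  have B_P: "B \<in> sets P" by (rule sets_F_subset[OF B])
  have Q_M: "Q \<in> ?M \<rightarrow>\<^sub>M subprob_algebra P"
    by (rule Q_subprob_density)
  have ne: "space ?M \<noteq> {}"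
    using not_empty by (simp add: space_restr_to_subalg)
  have sets_bind_M: "sets (?M \<bind> Q) = sets P"
    by (rule sets_bind) (use sets_Q ne in \<open>auto simp: space_restr_to_subalg\<close>)
  then show "sets (?M \<bind> Q) = sets (density P (indicator B))" by simp
  fix \<Gamma> assume "\<Gamma> \<in> sets (?M \<bind> Q)"
  then have \<Gamma>: "\<Gamma> \<in> sets P" using sets_bind_M by simp
  let ?rce = "real_cond_exp P F (indicator \<Gamma>)"
  have int_\<Gamma>: "integrable P (indicator \<Gamma> :: 'a \<Rightarrow> real)"
    using \<Gamma> by (intro integrable_real_indicator) (simp_all add: less_top[symmetric])
  have rce_nonneg: "AE \<omega> in P. 0 \<le> ?rce \<omega>"
    by (rule real_cond_exp_pos) (use \<Gamma> in auto)
  have Q\<Gamma>_F: "(\<lambda>\<omega>. emeasure (Q \<omega>) \<Gamma>) \<in> borel_measurable F"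
    using measurable_emeasure_subprob_algebra[OF \<Gamma>] Q_subprob by (rule measurable_compose[rotated])
  have int_B_rce: "set_integrable P B ?rce"
    unfolding set_integrable_def by (rule integrable_mult_indicator[OF B_P real_cond_exp_int(1)[OF int_\<Gamma>]])
  have "emeasure (?M \<bind> Q) \<Gamma> = (\<integral>\<^sup>+\<omega>. emeasure (Q \<omega>) \<Gamma> \<partial>?M)"
    by (rule emeasure_bind[OF ne Q_M \<Gamma>])
  also have "\<dots> = (\<integral>\<^sup>+\<omega>. indicator B \<omega> * emeasure (Q \<omega>) \<Gamma> \<partial>P)"
    using Q\<Gamma>_F B
    by (simp add: nn_integral_density measurable_in_subalg[OF subalg] nn_integral_subalgebra2[OF subalg])
  also have "\<dots> = (\<integral>\<^sup>+\<omega>. ennreal (indicator B \<omega> * ?rce \<omega>) \<partial>P)"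
  proof (rule nn_integral_cong_AE)
    show "AE \<omega> in P. indicator B \<omega> * emeasure (Q \<omega>) \<Gamma> = ennreal (indicator B \<omega> * ?rce \<omega>)"
      using Q_cond_prob[OF \<Gamma>] rce_nonneg AE_space
    proof eventually_elim
      case (elim \<omega>)
      then interpret Q\<omega>: prob_space "Q \<omega>" by (simp add: prob_space_Q)
      show ?case using elim by (simp add: Q\<omega>.emeasure_eq_measure split: split_indicator)
    qed
  qed
  also have "\<dots> = ennreal (\<integral>\<omega>\<in>B. ?rce \<omega> \<partial>P)"
    using int_B_rce rce_nonneg unfolding set_integrable_def set_lebesgue_integral_def real_scaleR_def
    by (intro nn_integral_eq_integral) (auto split: split_indicator)
  also have "\<dots> = ennreal (\<integral>\<omega>\<in>B. indicator \<Gamma> \<omega> \<partial>P)"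
    using real_cond_exp_intA[OF int_\<Gamma> B] by simp
  also have "\<dots> = emeasure P (B \<inter> \<Gamma>)"
    using B_P \<Gamma> by (simp add: set_lebesgue_integral_def indicator_inter_arith[symmetric] emeasure_eq_measure)
  also have "\<dots> = emeasure (density P (indicator B)) \<Gamma>"
    by (rule emeasure_restricted[OF B_P \<Gamma>, symmetric])
  finally show "emeasure (?M \<bind> Q) \<Gamma> = emeasure (density P (indicator B)) \<Gamma>" .
qed

lemma set_integral_integral_Q:
  fixes h :: "'a \<Rightarrow> real"
  assumes B: "B \<in> sets F" and h: "h \<in> borel_measurable P" and bnd: "\<And>x. x \<in> space P \<Longrightarrow> \<bar>h x\<bar> \<le> C"
  shows "(\<integral>\<omega>\<in>B. (\<integral>y. h y \<partial>Q \<omega>) \<partial>P) = (\<integral>\<omega>\<in>B. h \<omega> \<partial>P)"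
proof -
  let ?M = "density (restr_to_subalg P F) (indicator B)"
  have B_P: "B \<in> sets P" by (rule sets_F_subset[OF B])
  have hQ: "(\<lambda>\<omega>. \<integral>y. h y \<partial>Q \<omega>) \<in> borel_measurable F" by (rule measurable_integral_Q[OF h])
  have fin_M: "finite_measure ?M"
    by (rule finite_measure.finite_measure_restricted[OF finite_measure_restr_to_subalg[OF subalg]])
       (simp_all add: B sets_restr_to_subalg[OF subalg])
  have "(\<integral>\<omega>\<in>B. h \<omega> \<partial>P) = (\<integral>\<omega>. h \<omega> \<partial>density P (indicator B))"
    using integral_density[of h P "indicator B"] B_P h by (simp add: ennreal_indicator set_lebesgue_integral_def)
  also have "\<dots> = (\<integral>\<omega>. h \<omega> \<partial>(?M \<bind> Q))"
    by (simp add: bind_density_Q[OF B])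
  also have "\<dots> = (\<integral>\<omega>. (\<integral>y. h y \<partial>Q \<omega>) \<partial>?M)"
    by (rule integral_bind[OF h _ Q_subprob_density fin_M, where B=C and B'=1])
       (use bnd in \<open>auto intro!: subprob_space.subprob_emeasure_le_1
          simp: space_restr_to_subalg prob_space_Q prob_space_imp_subprob_space\<close>)
  also have "\<dots> = (\<integral>\<omega>. indicator B \<omega> * (\<integral>y. h y \<partial>Q \<omega>) \<partial>restr_to_subalg P F)"
    using integral_density[OF measurable_in_subalg[OF subalg hQ]
        measurable_in_subalg[OF subalg borel_measurable_indicator[OF B]]]
    by (simp add: ennreal_indicator)
  also have "\<dots> = (\<integral>\<omega>\<in>B. (\<integral>y. h y \<partial>Q \<omega>) \<partial>P)"
    using B hQ by (simp add: integral_subalgebra2[OF subalg] set_lebesgue_integral_def)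
  finally show ?thesis ..
qed

lemma AE_integral_Q_eq:
  fixes f g :: "'a \<Rightarrow> real"
  assumes S: "S \<in> sets F"
    and f: "f \<in> borel_measurable P" "\<And>x. x \<in> space P \<Longrightarrow> \<bar>f x\<bar> \<le> C"
    and g: "g \<in> borel_measurable P" "\<And>x. x \<in> space P \<Longrightarrow> \<bar>g x\<bar> \<le> C"
    and eq: "\<And>B. B \<in> sets F \<Longrightarrow> B \<subseteq> S \<Longrightarrow> (\<integral>x\<in>B. f x \<partial>P) = (\<integral>x\<in>B. g x \<partial>P)"
  shows "AE \<omega> in restr_to_subalg P F. \<omega> \<in> S \<longrightarrow> (\<integral>y. f y \<partial>Q \<omega>) = (\<integral>y. g y \<partial>Q \<omega>)"
proof -
  let ?PF = "restr_to_subalg P F"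
  let ?u = "\<lambda>h \<omega>. indicator S \<omega> * (\<integral>y. h y \<partial>Q \<omega>)"
  interpret PF: finite_measure ?PF
    by (rule finite_measure_restr_to_subalg[OF subalg finite_measure_axioms])
  have u_F: "?u h \<in> borel_measurable F" if "h \<in> borel_measurable P" for h :: "'a \<Rightarrow> real"
    using measurable_integral_Q[OF that] S by measurable
  have u_int: "integrable ?PF (?u h)"
    if "h \<in> borel_measurable P" "\<And>x. x \<in> space P \<Longrightarrow> \<bar>h x\<bar> \<le> C" for h :: "'a \<Rightarrow> real"
  proof -
    have "0 \<le> C" using that(2) not_empty by (meson abs_ge_zero ex_in_conv order_trans)
    then show ?thesis
      using integral_Q_bounded[OF _ that] measurable_in_subalg[OF subalg u_F[OF that(1)]]
      by (intro PF.integrable_const_bound[where B=C]) (auto simp: space_restr_to_subalg split: split_indicator)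
  qed
  have u_set_integral: "(\<integral>\<omega>\<in>B. ?u h \<omega> \<partial>?PF) = (\<integral>\<omega>\<in>B \<inter> S. h \<omega> \<partial>P)"
    if B: "B \<in> sets F" and h: "h \<in> borel_measurable P" "\<And>x. x \<in> space P \<Longrightarrow> \<bar>h x\<bar> \<le> C"
    for B and h :: "'a \<Rightarrow> real"
  proof -
    have "(\<lambda>\<omega>. indicator B \<omega> * ?u h \<omega>) \<in> borel_measurable F"
      using u_F[OF h(1)] B by measurable
    then have "(\<integral>\<omega>\<in>B. ?u h \<omega> \<partial>?PF) = (\<integral>\<omega>\<in>B \<inter> S. (\<integral>y. h y \<partial>Q \<omega>) \<partial>P)"
      by (simp add: set_lebesgue_integral_def integral_subalgebra2[OF subalg] indicator_inter_arith mult.assoc)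
    also have "\<dots> = (\<integral>\<omega>\<in>B \<inter> S. h \<omega> \<partial>P)"
      using B S h by (intro set_integral_integral_Q) auto
    finally show ?thesis .
  qed
  have "AE \<omega> in ?PF. ?u f \<omega> = ?u g \<omega>"
  proof (rule density_unique_real[OF u_int[OF f] u_int[OF g]])
    fix B assume "B \<in> sets ?PF"
    then have B: "B \<in> sets F" by (simp add: sets_restr_to_subalg[OF subalg])
    then show "(\<integral>\<omega>\<in>B. ?u f \<omega> \<partial>?PF) = (\<integral>\<omega>\<in>B. ?u g \<omega> \<partial>?PF)"
      using S by (simp add: u_set_integral f g eq)
  qed
  then show ?thesis by eventually_elim (simp add: indicator_def)
qed

end

section \<open>The coordinate filtration on path space\<close>

lemma space_coord_filt [simp]: "space (coord_filt t) = path_space"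
  unfolding coord_filt_def by (simp add: space_measure_of_conv)

lemma sets_coord_filt: "sets (coord_filt t) = sigma_sets path_space
    {(\<lambda>\<omega>. \<omega> r) -` U \<inter> path_space | r U. 0 \<le> r \<and> r \<le> t \<and> open U}"
  unfolding coord_filt_def by (rule sets_measure_of) auto

lemma space_path_sigma [simp]: "space path_sigma = path_space"
  unfolding path_sigma_def by (simp add: space_measure_of_conv)

lemma sets_path_sigma: "sets path_sigma = sigma_sets path_space
    {(\<lambda>\<omega>. \<omega> r) -` U \<inter> path_space | r U. 0 \<le> r \<and> open U}"
  unfolding path_sigma_def by (rule sets_measure_of) auto

lemma space_stopped_sigma [simp]: "space (stopped_sigma \<tau>) = path_space"
  unfolding stopped_sigma_def by (simp add: space_measure_of_conv)

lemma sets_stopped_sigma: "sets (stopped_sigma \<tau>) = sigma_sets path_space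
    {A \<in> sets path_sigma. \<forall>t\<ge>0. {\<omega> \<in> A. \<tau> \<omega> \<le> t} \<in> sets (coord_filt t)}"
  unfolding stopped_sigma_def
  by (rule sets_measure_of) (use sets.sets_into_space[of _ path_sigma] in auto)

lemma coord_filt_mono: "s \<le> t \<Longrightarrow> sets (coord_filt s) \<subseteq> sets (coord_filt t)"
  unfolding sets_coord_filt by (rule sigma_sets_mono') (use order_trans in blast)

lemma sets_coord_filt_subset: "sets (coord_filt t) \<subseteq> sets path_sigma"
  unfolding sets_coord_filt sets_path_sigma by (rule sigma_sets_mono') auto

lemma sets_stopped_sigma_subset: "sets (stopped_sigma \<tau>) \<subseteq> sets path_sigma"
  unfolding sets_stopped_sigma
  by (rule sets.sigma_sets_subset[of _ path_sigma, simplified]) auto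

lemma subalgebra_coord_filt: "sets M = sets path_sigma \<Longrightarrow> subalgebra M (coord_filt t)"
  using sets_coord_filt_subset[of t] sets_eq_imp_space_eq[of M path_sigma] by (simp add: subalgebra_def)

lemma subalgebra_stopped_sigma: "sets M = sets path_sigma \<Longrightarrow> subalgebra M (stopped_sigma \<tau>)"
  using sets_stopped_sigma_subset[of \<tau>] sets_eq_imp_space_eq[of M path_sigma] by (simp add: subalgebra_def)

lemma regular_cond_prob_stopped_sigma:
  assumes "prob_space P" and P_sets: "sets P = sets path_sigma"
    and "Q \<in> stopped_sigma \<tau> \<rightarrow>\<^sub>M prob_algebra path_sigma"
    and "\<forall>\<Gamma>\<in>sets path_sigma. AE \<omega> in P.
           measure (Q \<omega>) \<Gamma> = real_cond_exp P (stopped_sigma \<tau>) (indicator \<Gamma>) \<omega>"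
  shows "regular_cond_prob P (stopped_sigma \<tau>) Q"
proof -
  have "prob_algebra P = prob_algebra path_sigma"
    unfolding prob_algebra_def by (simp add: subprob_algebra_cong[OF P_sets])
  with assms subalgebra_stopped_sigma[OF P_sets] show ?thesis
    by (simp add: regular_cond_prob_def regular_cond_prob_axioms_def finite_measure_subalgebra_def
        finite_measure_subalgebra_axioms_def prob_space.finite_measure)
qed

lemma stopped_sigma_before_in_coord_filt:
  assumes \<tau>: "stopping_time coord_filt \<tau>" and B: "B \<in> sets (stopped_sigma \<tau>)" and "0 \<le> t"
  shows "{\<omega> \<in> B. \<tau> \<omega> \<le> t} \<in> sets (coord_filt t)"
  using B \<open>0 \<le> t\<close> unfolding sets_stopped_sigma
proof (induction arbitrary: t rule: sigma_sets.induct)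
  case (Compl A)
  have "{\<omega> \<in> path_space - A. \<tau> \<omega> \<le> t} = {\<omega> \<in> space (coord_filt t). \<tau> \<omega> \<le> t} - {\<omega> \<in> A. \<tau> \<omega> \<le> t}"
    by auto
  also have "\<dots> \<in> sets (coord_filt t)"
    using stopping_timeD[OF \<tau>, of t] Compl by (intro sets.Diff) (auto simp: pred_def)
  finally show ?case .
next
  case (Union A)
  have "{\<omega> \<in> \<Union>(range A). \<tau> \<omega> \<le> t} = (\<Union>i. {\<omega> \<in> A i. \<tau> \<omega> \<le> t})" by auto
  also have "\<dots> \<in> sets (coord_filt t)" using Union by (intro sets.countable_UN) auto
  finally show ?case .
qed auto

lemma stopping_time_le_in_stopped_sigma:
  assumes \<tau>: "stopping_time coord_filt \<tau>"
  shows "{\<omega> \<in> path_space. \<tau> \<omega> \<le> s} \<in> sets (stopped_sigma \<tau>)"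
proof -
  have le_in: "{\<omega> \<in> path_space. \<tau> \<omega> \<le> r} \<in> sets (coord_filt r)" for r
    using stopping_timeD[OF \<tau>, of r] by (simp add: pred_def)
  have "{\<omega> \<in> {\<omega> \<in> path_space. \<tau> \<omega> \<le> s}. \<tau> \<omega> \<le> t} \<in> sets (coord_filt t)" for t
  proof -
    have "{\<omega> \<in> {\<omega> \<in> path_space. \<tau> \<omega> \<le> s}. \<tau> \<omega> \<le> t} = {\<omega> \<in> path_space. \<tau> \<omega> \<le> min s t}"
      by auto
    then show ?thesis using le_in[of "min s t"] coord_filt_mono[of "min s t" t] by auto
  qed
  moreover have "{\<omega> \<in> path_space. \<tau> \<omega> \<le> s} \<in> sets path_sigma"
    using le_in sets_coord_filt_subset by blast
  ultimately show ?thesis unfolding sets_stopped_sigma by (intro sigma_sets.Basic) auto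
qed

text \<open>Rational times together with the endpoint \<open>s\<close> suffice: by continuity of paths every
  coordinate \<open>\<omega> r\<close> with \<open>r \<le> s\<close> is a limit of such coordinates.\<close>

definition coord_events :: "'a::euclidean_space set set \<Rightarrow> real \<Rightarrow> (real \<Rightarrow> 'a) set set" where
  "coord_events \<B> s = {(\<lambda>\<omega>. \<omega> r) -` U \<inter> path_space | r U. r \<in> insert s ({0..s} \<inter> \<rat>) \<and> U \<in> \<B>}"

definition coord_cylinders :: "'a::euclidean_space set set \<Rightarrow> real \<Rightarrow> (real \<Rightarrow> 'a) set set" where
  "coord_cylinders \<B> s = {path_space \<inter> \<Inter>C | C. finite C \<and> C \<subseteq> coord_events \<B> s}"

lemma countable_coord_cylinders:
  assumes "countable \<B>"
  shows "countable (coord_cylinders \<B> s)"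
proof -
  have "coord_events \<B> s = (\<lambda>(r, U). (\<lambda>\<omega>. \<omega> r) -` U \<inter> path_space) ` (insert s ({0..s} \<inter> \<rat>) \<times> \<B>)"
    unfolding coord_events_def by fastforce
  moreover have "countable (insert s ({0..s} \<inter> \<rat>) \<times> \<B>)"
    using assms countable_rat by (intro countable_SIGMA) auto
  ultimately have "countable (coord_events \<B> s)" by simp
  then have "countable ((\<lambda>C. path_space \<inter> \<Inter>C) ` {C. finite C \<and> C \<subseteq> coord_events \<B> s})"
    by (intro countable_image countable_Collect_finite_subset)
  moreover have "coord_cylinders \<B> s = (\<lambda>C. path_space \<inter> \<Inter>C) ` {C. finite C \<and> C \<subseteq> coord_events \<B> s}"
    unfolding coord_cylinders_def by auto
  ultimately show ?thesis by simp
qed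

lemma Int_stable_coord_cylinders: "Int_stable (coord_cylinders \<B> s)"
  unfolding Int_stable_def coord_cylinders_def
proof clarify
  fix C D assume "finite C" "C \<subseteq> coord_events \<B> s" "finite D" "D \<subseteq> coord_events \<B> s"
  then show "\<exists>E. path_space \<inter> \<Inter>C \<inter> (path_space \<inter> \<Inter>D) = path_space \<inter> \<Inter>E \<and> finite E \<and> E \<subseteq> coord_events \<B> s"
    by (intro exI[of _ "C \<union> D"]) auto
qed

lemma coord_cylinders_subset_Pow: "coord_cylinders \<B> s \<subseteq> Pow path_space"
  unfolding coord_cylinders_def by auto

lemma path_space_in_coord_cylinders: "path_space \<in> coord_cylinders \<B> s"
  unfolding coord_cylinders_def by (intro CollectI exI[of _ "{}"]) auto

lemma coord_events_subset_coord_cylinders: "coord_events \<B> s \<subseteq> coord_cylinders \<B> s"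
proof
  fix E assume E: "E \<in> coord_events \<B> s"
  then have "E = path_space \<inter> \<Inter>{E}" unfolding coord_events_def by auto
  with E show "E \<in> coord_cylinders \<B> s" unfolding coord_cylinders_def by blast
qed

lemma coord_cylinders_subset_coord_filt:
  assumes "\<And>U. U \<in> \<B> \<Longrightarrow> open U" "0 \<le> s"
  shows "coord_cylinders \<B> s \<subseteq> sets (coord_filt s)"
proof -
  have events: "coord_events \<B> s \<subseteq> sets (coord_filt s)"
    using assms unfolding coord_events_def sets_coord_filt by fastforce
  have "path_space \<inter> \<Inter>C \<in> sets (coord_filt s)"
    if "finite C" "C \<subseteq> sets (coord_filt s)" for C :: "(real \<Rightarrow> 'a) set set"
    using that
  proof (induction C rule: finite_induct)
    case empty
    then show ?case using sets.top[of "coord_filt s"] by simp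
  next
    case (insert E C)
    then have "path_space \<inter> \<Inter>(insert E C) = E \<inter> (path_space \<inter> \<Inter>C)" by auto
    with insert show ?case by auto
  qed
  with events show ?thesis unfolding coord_cylinders_def by blast
qed

lemma sigma_sets_coord_cylinders:
  assumes \<B>: "countable \<B>" "topological_basis \<B>" and "0 \<le> s"
  shows "sigma_sets path_space (coord_cylinders \<B> s) = sets (coord_filt s)"
proof
  have "coord_cylinders \<B> s \<subseteq> sets (coord_filt s)"
    using \<B>(2) \<open>0 \<le> s\<close> by (intro coord_cylinders_subset_coord_filt) (auto intro: topological_basis_open)
  then show "sigma_sets path_space (coord_cylinders \<B> s) \<subseteq> sets (coord_filt s)"
    using sets.sigma_sets_subset[of _ "coord_filt s"] by simp
next
  define M where "M = sigma path_space (coord_cylinders \<B> s)"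
  have sets_M: "sets M = sigma_sets path_space (coord_cylinders \<B> s)"
    unfolding M_def by (rule sets_measure_of[OF coord_cylinders_subset_Pow])
  have space_M: "space M = path_space"
    unfolding M_def by (simp add: space_measure_of_conv)
  have coord_in_events: "(\<lambda>\<omega>. \<omega> r) \<in> borel_measurable M" if r: "r \<in> insert s ({0..s} \<inter> \<rat>)" for r
  proof (rule measurable_sigma_sets)
    show "sets (borel :: 'a measure) = sigma_sets UNIV \<B>"
      by (simp add: borel_eq_countable_basis[OF \<B>])
    fix U assume "U \<in> \<B>"
    then have "(\<lambda>\<omega>. \<omega> r) -` U \<inter> space M \<in> coord_events \<B> s"
      unfolding coord_events_def space_M using r by blast
    then show "(\<lambda>\<omega>. \<omega> r) -` U \<inter> space M \<in> sets M"
      using coord_events_subset_coord_cylinders sets_M by auto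
  qed auto
  have coord: "(\<lambda>\<omega>. \<omega> r) \<in> borel_measurable M" if r: "0 \<le> r" "r \<le> s" for r
  proof (cases "r = s")
    case True
    then show ?thesis by (intro coord_in_events) simp
  next
    case False
    with r obtain q where q: "\<And>n. q n \<in> \<rat>" "\<And>n. r < q n" "\<And>n. q n < s" "q \<longlonglongrightarrow> r"
      using Rats_tendsto_from_above[of r s] by (metis order_le_less)
    have q_nonneg: "0 \<le> q n" for n using q(2)[of n] r(1) by linarith
    show ?thesis
    proof (rule borel_measurable_LIMSEQ_metric[where f="\<lambda>n \<omega>. \<omega> (q n)"])
      show "(\<lambda>\<omega>. \<omega> (q n)) \<in> borel_measurable M" for n
        using q(1,3)[of n] q_nonneg by (intro coord_in_events) auto
      fix \<omega> :: "real \<Rightarrow> 'a" assume "\<omega> \<in> space M"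
      then have "continuous_on {0..} \<omega>" unfolding space_M path_space_def by simp
      then show "(\<lambda>n. \<omega> (q n)) \<longlonglongrightarrow> \<omega> r"
        using q(4) q_nonneg r(1) by (auto simp: continuous_on_sequentially comp_def)
    qed
  qed
  have "(\<lambda>\<omega>. \<omega> r) -` U \<inter> path_space \<in> sigma_sets path_space (coord_cylinders \<B> s)"
    if "0 \<le> r" "r \<le> s" "open U" for r and U :: "'a set"
    using measurable_sets[OF coord[OF that(1,2)], of U] that(3) sets_M space_M by simp
  then show "sets (coord_filt s) \<subseteq> sigma_sets path_space (coord_cylinders \<B> s)"
    unfolding sets_coord_filt by (intro sigma_sets_mono) auto
qed

section \<open>Transfer of the bound to the conditional probabilities\<close>

lemma bounded_versions_of_cond_exp:
  fixes P :: "(real \<Rightarrow> 'a::euclidean_space) measure" and X :: "real \<Rightarrow> (real \<Rightarrow> 'a) \<Rightarrow> real"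
  assumes P: "prob_space P" "sets P = sets path_sigma"
    and X_meas: "\<And>s. 0 \<le> s \<Longrightarrow> X s \<in> borel_measurable path_sigma"
    and X_bdd: "\<And>s \<omega>. 0 \<le> s \<Longrightarrow> \<omega> \<in> path_space \<Longrightarrow> \<bar>X s \<omega>\<bar> \<le> K\<^sub>0"
    and X_sub: "\<And>s. 0 \<le> s \<Longrightarrow> AE \<omega> in P. real_cond_exp P (coord_filt s) (X s) \<omega> \<le> A"
  obtains K Z where "\<And>s \<omega>. 0 \<le> s \<Longrightarrow> \<omega> \<in> path_space \<Longrightarrow> \<bar>X s \<omega>\<bar> \<le> K"
    "\<And>s. 0 \<le> s \<Longrightarrow> Z s \<in> borel_measurable (coord_filt s)"
    "\<And>s \<omega>. 0 \<le> s \<Longrightarrow> \<bar>Z s \<omega>\<bar> \<le> K" "\<And>s \<omega>. 0 \<le> s \<Longrightarrow> Z s \<omega> \<le> A"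
    "\<And>s \<Gamma>. 0 \<le> s \<Longrightarrow> \<Gamma> \<in> sets (coord_filt s) \<Longrightarrow> (\<integral>\<omega>\<in>\<Gamma>. X s \<omega> \<partial>P) = (\<integral>\<omega>\<in>\<Gamma>. Z s \<omega> \<partial>P)"
proof -
  define K where "K = max K\<^sub>0 \<bar>A\<bar>"
  have X_K: "\<bar>X s \<omega>\<bar> \<le> K" if "0 \<le> s" "\<omega> \<in> path_space" for s \<omega>
    using X_bdd[OF that] by (simp add: K_def)
  have "\<exists>Z\<in>borel_measurable (coord_filt s). (\<forall>\<omega>. \<bar>Z \<omega>\<bar> \<le> K \<and> Z \<omega> \<le> A) \<and>
      (\<forall>\<Gamma>\<in>sets (coord_filt s). (\<integral>\<omega>\<in>\<Gamma>. X s \<omega> \<partial>P) = (\<integral>\<omega>\<in>\<Gamma>. Z \<omega> \<partial>P))"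
    if s: "0 \<le> s" for s
  proof -
    interpret prob_space P by (rule P(1))
    interpret finite_measure_subalgebra P "coord_filt s"
      by unfold_locales (rule subalgebra_coord_filt[OF P(2)])
    have X_P: "X s \<in> borel_measurable P"
      using X_meas[OF s] by (simp add: measurable_cong_sets[OF P(2) refl])
    have space_P: "space P = path_space" using sets_eq_imp_space_eq[OF P(2)] by simp
    have "\<exists>Z\<in>borel_measurable (coord_filt s). (\<forall>\<omega>. -K \<le> Z \<omega> \<and> Z \<omega> \<le> A) \<and>
        (\<forall>\<Gamma>\<in>sets (coord_filt s). (\<integral>\<omega>\<in>\<Gamma>. X s \<omega> \<partial>P) = (\<integral>\<omega>\<in>\<Gamma>. Z \<omega> \<partial>P))"
    proof (rule real_cond_exp_bounded_version)
      show "integrable P (X s)"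
        using X_P X_K[OF s] by (intro integrable_const_bound[where B=K]) (auto simp: space_P)
      have "- K \<le> X s \<omega>" if "\<omega> \<in> space P" for \<omega>
        using X_K[OF s, of \<omega>] that by (auto simp: space_P)
      then show "AE \<omega> in P. - K \<le> X s \<omega>" by auto
    qed (use X_sub[OF s] in \<open>auto simp: K_def\<close>)
    moreover have "\<bar>z\<bar> \<le> K" if "-K \<le> z" "z \<le> A" for z
      using that by (auto simp: K_def)
    ultimately show ?thesis by blast
  qed
  then obtain Z where "\<And>s. 0 \<le> s \<Longrightarrow> Z s \<in> borel_measurable (coord_filt s) \<and> (\<forall>\<omega>. \<bar>Z s \<omega>\<bar> \<le> K \<and> Z s \<omega> \<le> A) \<and>
      (\<forall>\<Gamma>\<in>sets (coord_filt s). (\<integral>\<omega>\<in>\<Gamma>. X s \<omega> \<partial>P) = (\<integral>\<omega>\<in>\<Gamma>. Z s \<omega> \<partial>P))"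
    by metis
  with X_K show ?thesis using that by blast
qed

lemma AE_version_under_rcpd:
  fixes P :: "(real \<Rightarrow> 'a::euclidean_space) measure" and X Z :: "(real \<Rightarrow> 'a) \<Rightarrow> real"
  assumes "regular_cond_prob P (stopped_sigma \<tau>) Q" and P_sets: "sets P = sets path_sigma"
    and \<tau>: "stopping_time coord_filt \<tau>" and "0 \<le> s"
    and X: "X \<in> borel_measurable path_sigma" "\<And>\<omega>. \<omega> \<in> path_space \<Longrightarrow> \<bar>X \<omega>\<bar> \<le> K"
    and Z: "Z \<in> borel_measurable (coord_filt s)" "\<And>\<omega>. \<bar>Z \<omega>\<bar> \<le> K"
    and version: "\<And>\<Gamma>. \<Gamma> \<in> sets (coord_filt s) \<Longrightarrow> (\<integral>\<omega>\<in>\<Gamma>. X \<omega> \<partial>P) = (\<integral>\<omega>\<in>\<Gamma>. Z \<omega> \<partial>P)"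
    and \<Gamma>: "\<Gamma> \<in> sets (coord_filt s)"
  shows "AE \<omega> in restr_to_subalg P (stopped_sigma \<tau>).
           \<tau> \<omega> \<le> s \<longrightarrow> (\<integral>y\<in>\<Gamma>. X y \<partial>Q \<omega>) = (\<integral>y\<in>\<Gamma>. Z y \<partial>Q \<omega>)"
proof -
  interpret regular_cond_prob P "stopped_sigma \<tau>" Q by fact
  let ?S = "{\<omega> \<in> path_space. \<tau> \<omega> \<le> s}"
  have space_P: "space P = path_space" using sets_eq_imp_space_eq[OF P_sets] by simp
  have \<Gamma>_P: "\<Gamma> \<in> sets P" using \<Gamma> sets_coord_filt_subset P_sets by blast
  have X_P: "X \<in> borel_measurable P" using X(1) by (simp add: measurable_cong_sets[OF P_sets refl])
  have Z_P: "Z \<in> borel_measurable P"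
    by (rule measurable_from_subalg[OF subalgebra_coord_filt[OF P_sets] Z(1)])
  have "0 \<le> K" using Z(2)[of undefined] by linarith
  have "AE \<omega> in restr_to_subalg P (stopped_sigma \<tau>). \<omega> \<in> ?S \<longrightarrow>
      (\<integral>y. indicator \<Gamma> y * X y \<partial>Q \<omega>) = (\<integral>y. indicator \<Gamma> y * Z y \<partial>Q \<omega>)"
  proof (rule AE_integral_Q_eq[where C=K])
    show "?S \<in> sets (stopped_sigma \<tau>)" by (rule stopping_time_le_in_stopped_sigma[OF \<tau>])
    show "(\<lambda>y. indicator \<Gamma> y * X y) \<in> borel_measurable P" "(\<lambda>y. indicator \<Gamma> y * Z y) \<in> borel_measurable P"
      using \<Gamma>_P X_P Z_P by measurable
    show "\<bar>indicator \<Gamma> y * X y\<bar> \<le> K" "\<bar>indicator \<Gamma> y * Z y\<bar> \<le> K" if "y \<in> space P" for y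
      using X(2) Z(2) that \<open>0 \<le> K\<close> by (auto simp: space_P split: split_indicator)
  next
    fix B assume B: "B \<in> sets (stopped_sigma \<tau>)" "B \<subseteq> ?S"
    then have "{\<omega> \<in> B. \<tau> \<omega> \<le> s} \<in> sets (coord_filt s)"
      using stopped_sigma_before_in_coord_filt[OF \<tau>] \<open>0 \<le> s\<close> by blast
    moreover have "{\<omega> \<in> B. \<tau> \<omega> \<le> s} = B" using B(2) by auto
    ultimately have "B \<inter> \<Gamma> \<in> sets (coord_filt s)" using \<Gamma> by auto
    then show "(\<integral>x\<in>B. indicator \<Gamma> x * X x \<partial>P) = (\<integral>x\<in>B. indicator \<Gamma> x * Z x \<partial>P)"
      using version[of "B \<inter> \<Gamma>"] by (simp add: set_lebesgue_integral_def indicator_inter_arith mult.assoc)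
  qed
  with AE_space show ?thesis
    by eventually_elim (simp add: set_lebesgue_integral_def space_restr_to_subalg space_P)
qed

lemma set_integral_le_of_version_on_cylinders:
  fixes R :: "(real \<Rightarrow> 'a::euclidean_space) measure" and X Z :: "(real \<Rightarrow> 'a) \<Rightarrow> real"
  assumes R: "prob_space R" "sets R = sets path_sigma"
    and \<B>: "countable \<B>" "topological_basis \<B>" and "0 \<le> s"
    and X: "X \<in> borel_measurable path_sigma" "\<And>\<omega>. \<omega> \<in> path_space \<Longrightarrow> \<bar>X \<omega>\<bar> \<le> K"
    and Z: "Z \<in> borel_measurable (coord_filt s)" "\<And>\<omega>. \<bar>Z \<omega>\<bar> \<le> K" "\<And>\<omega>. Z \<omega> \<le> A"
    and eq: "\<And>\<Gamma>. \<Gamma> \<in> coord_cylinders \<B> s \<Longrightarrow> (\<integral>y\<in>\<Gamma>. X y \<partial>R) = (\<integral>y\<in>\<Gamma>. Z y \<partial>R)"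
    and \<Gamma>: "\<Gamma> \<in> sets (coord_filt s)"
  shows "(\<integral>y\<in>\<Gamma>. X y \<partial>R) \<le> A * measure R \<Gamma>"
proof -
  interpret prob_space R by (rule R(1))
  have space_R: "space R = path_space" using sets_eq_imp_space_eq[OF R(2)] by simp
  have \<Gamma>_R: "\<Gamma> \<in> sets R" using \<Gamma> sets_coord_filt_subset R(2) by blast
  have X_int: "integrable R X"
    using X by (intro integrable_const_bound[where B=K]) (auto simp: space_R measurable_cong_sets[OF R(2) refl])
  have Z_int: "integrable R Z"
    using Z measurable_from_subalg[OF subalgebra_coord_filt[OF R(2)]]
    by (intro integrable_const_bound[where B=K]) auto
  have "(\<integral>y\<in>\<Gamma>. X y \<partial>R) = (\<integral>y\<in>\<Gamma>. Z y \<partial>R)"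
  proof (rule set_integral_eq_sigma_sets[OF Int_stable_coord_cylinders _ _ _ X_int Z_int eq])
    show "coord_cylinders \<B> s \<subseteq> Pow (space R)" "space R \<in> coord_cylinders \<B> s"
      using coord_cylinders_subset_Pow path_space_in_coord_cylinders by (auto simp: space_R)
    show "sigma_sets (space R) (coord_cylinders \<B> s) \<subseteq> sets R" "\<Gamma> \<in> sigma_sets (space R) (coord_cylinders \<B> s)"
      using sigma_sets_coord_cylinders[OF \<B> \<open>0 \<le> s\<close>] sets_coord_filt_subset R(2) \<Gamma> by (auto simp: space_R)
  qed
  also have "\<dots> \<le> (\<integral>y\<in>\<Gamma>. A \<partial>R)"
  proof (rule set_integral_mono)
    show "set_integrable R \<Gamma> Z"
      unfolding set_integrable_def by (rule integrable_mult_indicator[OF \<Gamma>_R Z_int])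
    show "set_integrable R \<Gamma> (\<lambda>_. A)"
      unfolding set_integrable_def by (rule integrable_mult_indicator[OF \<Gamma>_R]) simp
  qed (rule Z(3))
  also have "\<dots> = A * measure R \<Gamma>"
    using set_integral_const[OF \<Gamma>_R, of A] by simp
  finally show ?thesis .
qed

lemma cond_exp_le_of_right_set_integrals:
  fixes R :: "(real \<Rightarrow> 'a::euclidean_space) measure" and X :: "real \<Rightarrow> (real \<Rightarrow> 'a) \<Rightarrow> real"
  assumes R: "prob_space R" "sets R = sets path_sigma" and "0 \<le> t"
    and X_meas: "\<And>s. 0 \<le> s \<Longrightarrow> X s \<in> borel_measurable path_sigma"
    and X_cont: "\<And>\<omega>. \<omega> \<in> path_space \<Longrightarrow> continuous_on {0..} (\<lambda>s. X s \<omega>)"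
    and X_bdd: "\<And>s \<omega>. 0 \<le> s \<Longrightarrow> \<omega> \<in> path_space \<Longrightarrow> \<bar>X s \<omega>\<bar> \<le> K"
    and le: "\<And>s \<Gamma>. s \<in> \<rat> \<Longrightarrow> t < s \<Longrightarrow> \<Gamma> \<in> sets (coord_filt s) \<Longrightarrow>
      (\<integral>y\<in>\<Gamma>. X s y \<partial>R) \<le> A * measure R \<Gamma>"
  shows "AE y in R. real_cond_exp R (coord_filt t) (X t) y \<le> A"
proof -
  interpret prob_space R by (rule R(1))
  interpret finite_measure_subalgebra R "coord_filt t"
    by unfold_locales (rule subalgebra_coord_filt[OF R(2)])
  have space_R: "space R = path_space" using sets_eq_imp_space_eq[OF R(2)] by simp
  have X_R: "X s \<in> borel_measurable R" if "0 \<le> s" for s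
    using X_meas[OF that] by (simp add: measurable_cong_sets[OF R(2) refl])
  show ?thesis
  proof (rule real_cond_exp_le_const)
    show "integrable R (X t)"
      using X_R X_bdd \<open>0 \<le> t\<close> by (intro integrable_const_bound[where B=K]) (auto simp: space_R)
    fix \<Gamma> :: "(real \<Rightarrow> 'a) set" assume \<Gamma>: "\<Gamma> \<in> sets (coord_filt t)"
    then have \<Gamma>_R: "\<Gamma> \<in> sets R" using sets_coord_filt_subset R(2) by blast
    show "(\<integral>y\<in>\<Gamma>. X t y \<partial>R) \<le> A * measure R \<Gamma>"
      unfolding set_lebesgue_integral_def real_scaleR_def
    proof (rule integral_le_of_Rats_right_limit[where K=K])
      show "(\<lambda>y. indicator \<Gamma> y * X s y) \<in> borel_measurable R" if "0 \<le> s" for s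
        using X_R[OF that] \<Gamma>_R by measurable
      show "\<bar>indicator \<Gamma> y * X s y\<bar> \<le> K" if "0 \<le> s" "y \<in> space R" for s y
        using X_bdd[OF that(1), of y] that(2) by (auto simp: space_R split: split_indicator)
      show "continuous_on {0..} (\<lambda>s. indicator \<Gamma> y * X s y)" if "y \<in> space R" for y
        using X_cont that by (auto simp: space_R intro: continuous_on_mult_left)
      show "(\<integral>y. indicator \<Gamma> y * X s y \<partial>R) \<le> A * measure R \<Gamma>" if "s \<in> \<rat>" "t < s" for s
        using le[OF that] \<Gamma> coord_filt_mono[of t s] that(2) by (auto simp: set_lebesgue_integral_def)
    qed (use \<open>0 \<le> t\<close> finite_measure_axioms in auto)
  qed
qed

lemma cond_exp_le_of_versions_on_cylinders:
  fixes R :: "(real \<Rightarrow> 'a::euclidean_space) measure" and X Z :: "real \<Rightarrow> (real \<Rightarrow> 'a) \<Rightarrow> real"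
  assumes R: "prob_space R" "sets R = sets path_sigma"
    and \<B>: "countable \<B>" "topological_basis \<B>" and "0 \<le> t"
    and X_meas: "\<And>s. 0 \<le> s \<Longrightarrow> X s \<in> borel_measurable path_sigma"
    and X_cont: "\<And>\<omega>. \<omega> \<in> path_space \<Longrightarrow> continuous_on {0..} (\<lambda>s. X s \<omega>)"
    and X_bdd: "\<And>s \<omega>. 0 \<le> s \<Longrightarrow> \<omega> \<in> path_space \<Longrightarrow> \<bar>X s \<omega>\<bar> \<le> K"
    and Z_meas: "\<And>s. 0 \<le> s \<Longrightarrow> Z s \<in> borel_measurable (coord_filt s)"
    and Z_bdd: "\<And>s \<omega>. 0 \<le> s \<Longrightarrow> \<bar>Z s \<omega>\<bar> \<le> K" and Z_le: "\<And>s \<omega>. 0 \<le> s \<Longrightarrow> Z s \<omega> \<le> A"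
    and eq: "\<And>s \<Gamma>. s \<in> \<rat> \<Longrightarrow> t < s \<Longrightarrow> \<Gamma> \<in> coord_cylinders \<B> s \<Longrightarrow>
      (\<integral>y\<in>\<Gamma>. X s y \<partial>R) = (\<integral>y\<in>\<Gamma>. Z s y \<partial>R)"
  shows "AE y in R. real_cond_exp R (coord_filt t) (X t) y \<le> A"
proof (rule cond_exp_le_of_right_set_integrals[OF R \<open>0 \<le> t\<close> X_meas X_cont X_bdd])
  fix s and \<Gamma> :: "(real \<Rightarrow> 'a) set"
  assume s: "s \<in> \<rat>" "t < s" and \<Gamma>: "\<Gamma> \<in> sets (coord_filt s)"
  then have "0 \<le> s" using \<open>0 \<le> t\<close> by simp
  then show "(\<integral>y\<in>\<Gamma>. X s y \<partial>R) \<le> A * measure R \<Gamma>"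
    using X_meas X_bdd Z_meas Z_bdd Z_le eq[OF s]
    by (intro set_integral_le_of_version_on_cylinders[OF R \<B> _ _ _ _ _ _ _ \<Gamma>]) auto
qed auto

lemma null_set_off_which_versions_persist:
  fixes P :: "(real \<Rightarrow> 'a::euclidean_space) measure" and X Z :: "real \<Rightarrow> (real \<Rightarrow> 'a) \<Rightarrow> real"
  assumes rcp: "regular_cond_prob P (stopped_sigma \<tau>) Q" and P_sets: "sets P = sets path_sigma"
    and \<tau>: "stopping_time coord_filt \<tau>" and \<B>: "countable \<B>" "topological_basis \<B>"
    and X_meas: "\<And>s. 0 \<le> s \<Longrightarrow> X s \<in> borel_measurable path_sigma"
    and X_bdd: "\<And>s \<omega>. 0 \<le> s \<Longrightarrow> \<omega> \<in> path_space \<Longrightarrow> \<bar>X s \<omega>\<bar> \<le> K"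
    and Z_meas: "\<And>s. 0 \<le> s \<Longrightarrow> Z s \<in> borel_measurable (coord_filt s)"
    and Z_bdd: "\<And>s \<omega>. 0 \<le> s \<Longrightarrow> \<bar>Z s \<omega>\<bar> \<le> K"
    and version: "\<And>s \<Gamma>. 0 \<le> s \<Longrightarrow> \<Gamma> \<in> sets (coord_filt s) \<Longrightarrow>
      (\<integral>\<omega>\<in>\<Gamma>. X s \<omega> \<partial>P) = (\<integral>\<omega>\<in>\<Gamma>. Z s \<omega> \<partial>P)"
  obtains N where "N \<in> sets (stopped_sigma \<tau>)" "emeasure P N = 0"
    "\<And>\<omega> s \<Gamma>. \<omega> \<in> path_space - N \<Longrightarrow> s \<in> \<rat> \<Longrightarrow> 0 \<le> s \<Longrightarrow> \<tau> \<omega> \<le> s \<Longrightarrow>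
      \<Gamma> \<in> coord_cylinders \<B> s \<Longrightarrow> (\<integral>y\<in>\<Gamma>. X s y \<partial>Q \<omega>) = (\<integral>y\<in>\<Gamma>. Z s y \<partial>Q \<omega>)"
proof -
  let ?I = "SIGMA s:{0..} \<inter> \<rat>. coord_cylinders \<B> s"
  have cylinders_F: "\<Gamma> \<in> sets (coord_filt s)" if "0 \<le> s" "\<Gamma> \<in> coord_cylinders \<B> s" for s \<Gamma>
    using coord_cylinders_subset_coord_filt[of \<B> s] topological_basis_open[OF \<B>(2)] that by blast
  have "countable ?I"
    using countable_coord_cylinders[OF \<B>(1)] countable_rat by (intro countable_SIGMA) auto
  moreover have "AE \<omega> in restr_to_subalg P (stopped_sigma \<tau>).
      \<tau> \<omega> \<le> s \<longrightarrow> (\<integral>y\<in>\<Gamma>. X s y \<partial>Q \<omega>) = (\<integral>y\<in>\<Gamma>. Z s y \<partial>Q \<omega>)" if "(s, \<Gamma>) \<in> ?I" for s \<Gamma>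
    using that X_meas X_bdd Z_meas Z_bdd version cylinders_F
    by (intro AE_version_under_rcpd[OF rcp P_sets \<tau>, where K=K]) auto
  ultimately have "AE \<omega> in restr_to_subalg P (stopped_sigma \<tau>). \<forall>(s, \<Gamma>)\<in>?I.
      \<tau> \<omega> \<le> s \<longrightarrow> (\<integral>y\<in>\<Gamma>. X s y \<partial>Q \<omega>) = (\<integral>y\<in>\<Gamma>. Z s y \<partial>Q \<omega>)"
    by (subst AE_ball_countable) auto
  then obtain N where N: "N \<in> null_sets (restr_to_subalg P (stopped_sigma \<tau>))"
    and off_N: "\<And>\<omega> s \<Gamma>. \<omega> \<in> path_space - N \<Longrightarrow> (s, \<Gamma>) \<in> ?I \<Longrightarrow> \<tau> \<omega> \<le> s \<Longrightarrow>
      (\<integral>y\<in>\<Gamma>. X s y \<partial>Q \<omega>) = (\<integral>y\<in>\<Gamma>. Z s y \<partial>Q \<omega>)"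
    by (auto simp: eventually_ae_filter space_restr_to_subalg sets_eq_imp_space_eq[OF P_sets])
  moreover have "N \<in> sets (stopped_sigma \<tau>)" "emeasure P N = 0"
    using N null_sets_restr_to_subalg[OF subalgebra_stopped_sigma[OF P_sets]] by auto
  ultimately show ?thesis using that by blast
qed

theorem lemma7p4:
  fixes P :: "(real \<Rightarrow> 'a::euclidean_space) measure"
    and \<tau> :: "(real \<Rightarrow> 'a) \<Rightarrow> real"
    and Q :: "(real \<Rightarrow> 'a) \<Rightarrow> (real \<Rightarrow> 'a) measure"
    and X :: "real \<Rightarrow> (real \<Rightarrow> 'a) \<Rightarrow> real"
    and A :: real
  assumes P_prob: "prob_space P"
    and P_sets: "sets P = sets path_sigma"
    and tau_nonneg: "\<forall>\<omega>\<in>path_space. 0 \<le> \<tau> \<omega>"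
    and tau_stop: "stopping_time coord_filt \<tau>"
    and Q_meas: "Q \<in> stopped_sigma \<tau> \<rightarrow>\<^sub>M prob_algebra path_sigma"
    and Q_rcpd: "\<forall>\<Gamma>\<in>sets path_sigma. AE \<omega> in P.
                   measure (Q \<omega>) \<Gamma> = real_cond_exp P (stopped_sigma \<tau>) (indicator \<Gamma>) \<omega>"
    and X_meas: "\<forall>t\<ge>0. X t \<in> borel_measurable path_sigma"
    and X_cont: "\<forall>\<omega>\<in>path_space. continuous_on {0..} (\<lambda>t. X t \<omega>)"
    and X_bdd: "\<exists>K. \<forall>t\<ge>0. \<forall>\<omega>\<in>path_space. \<bar>X t \<omega>\<bar> \<le> K"
    and X_sub: "\<forall>t\<ge>0. AE \<omega> in P. real_cond_exp P (coord_filt t) (X t) \<omega> \<le> A"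
  shows "\<exists>N \<in> sets (stopped_sigma \<tau>). emeasure P N = 0 \<and>
           (\<forall>\<omega>\<in>path_space - N. \<forall>t\<ge>\<tau> \<omega>.
              AE \<omega>' in Q \<omega>. real_cond_exp (Q \<omega>) (coord_filt t) (X t) \<omega>' \<le> A)"
proof -
  obtain K\<^sub>0 where K\<^sub>0: "\<forall>t\<ge>0. \<forall>\<omega>\<in>path_space. \<bar>X t \<omega>\<bar> \<le> K\<^sub>0" using X_bdd by blast
  obtain K Z where X_K: "\<And>s \<omega>. 0 \<le> s \<Longrightarrow> \<omega> \<in> path_space \<Longrightarrow> \<bar>X s \<omega>\<bar> \<le> K"
    and Z_meas: "\<And>s. 0 \<le> s \<Longrightarrow> Z s \<in> borel_measurable (coord_filt s)"
    and Z_bdd: "\<And>s \<omega>. 0 \<le> s \<Longrightarrow> \<bar>Z s \<omega>\<bar> \<le> K" and Z_le: "\<And>s \<omega>. 0 \<le> s \<Longrightarrow> Z s \<omega> \<le> A"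
    and Z_version: "\<And>s \<Gamma>. 0 \<le> s \<Longrightarrow> \<Gamma> \<in> sets (coord_filt s) \<Longrightarrow>
      (\<integral>\<omega>\<in>\<Gamma>. X s \<omega> \<partial>P) = (\<integral>\<omega>\<in>\<Gamma>. Z s \<omega> \<partial>P)"
    by (rule bounded_versions_of_cond_exp[OF P_prob P_sets, of X K\<^sub>0 A]) (use X_meas X_sub K\<^sub>0 in auto)
  obtain \<B> :: "'a set set" where \<B>: "countable \<B>" "topological_basis \<B>"
    using ex_countable_basis by blast
  have rcp: "regular_cond_prob P (stopped_sigma \<tau>) Q"
    by (rule regular_cond_prob_stopped_sigma[OF P_prob P_sets Q_meas Q_rcpd])
  obtain N where N: "N \<in> sets (stopped_sigma \<tau>)" "emeasure P N = 0"
    and off_N: "\<And>\<omega> s \<Gamma>. \<omega> \<in> path_space - N \<Longrightarrow> s \<in> \<rat> \<Longrightarrow> 0 \<le> s \<Longrightarrow> \<tau> \<omega> \<le> s \<Longrightarrow>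
      \<Gamma> \<in> coord_cylinders \<B> s \<Longrightarrow> (\<integral>y\<in>\<Gamma>. X s y \<partial>Q \<omega>) = (\<integral>y\<in>\<Gamma>. Z s y \<partial>Q \<omega>)"
    by (rule null_set_off_which_versions_persist[OF rcp P_sets tau_stop \<B> _ X_K Z_meas Z_bdd Z_version])
       (use X_meas in auto)
  show ?thesis
  proof (intro bexI conjI ballI allI impI)
    fix \<omega> t assume \<omega>: "\<omega> \<in> path_space - N" and "\<tau> \<omega> \<le> t"
    then have "0 \<le> t" using tau_nonneg by force
    have "prob_space (Q \<omega>)" "sets (Q \<omega>) = sets path_sigma"
      using \<omega> regular_cond_prob.prob_space_Q[OF rcp] regular_cond_prob.sets_Q[OF rcp] P_sets
      by (auto simp: sets_eq_imp_space_eq[OF P_sets])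
    then show "AE \<omega>' in Q \<omega>. real_cond_exp (Q \<omega>) (coord_filt t) (X t) \<omega>' \<le> A"
      using X_meas X_cont off_N[OF \<omega>] \<open>\<tau> \<omega> \<le> t\<close> \<open>0 \<le> t\<close>
      by (intro cond_exp_le_of_versions_on_cylinders[OF _ _ \<B> \<open>0 \<le> t\<close> _ _ X_K Z_meas Z_bdd Z_le]) auto
  qed (fact N)+
qed

end
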